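(* Let $k\geq1$ and let $c_0,\dots,c_{k-1}$ be non-negative integers with $c_0\geq1$. Let $P(z)=z^k-\sum_{i=0}^{k-1}c_iz^i$, let $\eta_1,\dots,\eta_k$ be its complex roots listed with multiplicity, let $\varphi$ be its unique positive real root, let $g=\gcd(\{i:c_i\neq0\}\cup\{k\})$, and (when $k>g$) let $\psi$ be a root of largest absolute value among the roots with $|\eta|<\varphi$. Then for every positive integer $N$: (i) if $g\nmid N$, then $|\eta_1^N+\dots+\eta_k^N|\leq (k-g)|\psi|^N$; (ii) if $g\mid N$, then $|g\varphi^N-(\eta_1^N+\dots+\eta_k^N)|\leq (k-g)|\psi|^N$. (When $k=g$ the right-hand sides are to be read as $0$.) *)

theory Defs
  imports "HOL-Analysis.Analysis" "HOL-Computational_Algebra.Polynomial"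
begin

definition char_poly :: "nat \<Rightarrow> (nat \<Rightarrow> nat) \<Rightarrow> complex poly" where
  "char_poly k c = monom 1 k - (\<Sum>i<k. monom (of_nat (c i)) i)"

definition char_gcd :: "nat \<Rightarrow> (nat \<Rightarrow> nat) \<Rightarrow> nat" where
  "char_gcd k c = Gcd ({i. i < k \<and> c i \<noteq> 0} \<union> {k})"

end

theory Submission
  imports Defs
begin

text \<open>
  Every root of \<open>P\<close> has modulus at most \<open>\<phi>\<close>, since the coefficients \<open>c\<^sub>i\<close> are non-negative.
  A root \<open>\<eta>\<close> of modulus exactly \<open>\<phi>\<close> forces equality in the triangle inequality for
  \<open>\<eta>\<^sup>k = \<Sum> c\<^sub>i \<eta>\<^sup>i\<close>, so all non-zero terms point in the same direction; this makes
  \<open>(\<eta>/\<phi>)\<^sup>i = (\<eta>/\<phi>)\<^sup>k = 1\<close> for every \<open>i\<close> with \<open>c\<^sub>i \<noteq> 0\<close>, i.e. \<open>\<eta>/\<phi>\<close> is a \<open>g\<close>-th root of unity.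
  Conversely \<open>P(\<zeta>z) = P(z)\<close> for every \<open>g\<close>-th root of unity \<open>\<zeta>\<close>, and \<open>\<phi>\<close> is a simple root, so the
  roots of modulus \<open>\<phi>\<close> are exactly the \<open>g\<close> simple roots \<open>\<phi>\<zeta>\<close>. Their \<open>N\<close>-th powers sum to
  \<open>g\<phi>\<^sup>N\<close> or \<open>0\<close> according as \<open>g\<close> divides \<open>N\<close>, and each of the remaining \<open>k - g\<close> roots
  contributes at most \<open>|\<psi>|\<^sup>N\<close>.
\<close>

lemma sum_power_roots_unity:
  assumes "n > 0"
  shows "(\<Sum>z\<in>{z::complex. z ^ n = 1}. z ^ N) = (if n dvd N then of_nat n else 0)"
proof (cases "n dvd N")
  case True
  then obtain m where "N = n * m" by blast
  then have "(\<Sum>z\<in>{z::complex. z ^ n = 1}. z ^ N) = (\<Sum>z\<in>{z::complex. z ^ n = 1}. 1)"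
    by (intro sum.cong refl) (simp add: power_mult)
  also have "\<dots> = of_nat n" using card_roots_unity_eq[OF assms] by simp
  finally show ?thesis using True by simp
next
  case False
  define \<omega> where "\<omega> = cis (2 * pi * real N / real n)"
  have "\<omega> \<noteq> 1"
  proof
    assume "\<omega> = 1"
    then have "cos (2 * pi * real N / real n) = 1" by (simp add: \<omega>_def complex_eq_iff)
    then obtain m :: int where "2 * pi * real N / real n = real_of_int m * 2 * pi"
      by (subst (asm) cos_one_2pi_int) blast
    then have "real N = real_of_int m * real n" using assms by (simp add: field_simps)
    then have "int N = m * int n" by (metis of_int_eq_iff of_int_mult of_int_of_nat_eq)
    then show False using False by (metis dvd_triv_right int_dvd_int_iff)
  qed
  have "(\<Sum>z\<in>{z::complex. z ^ n = 1}. z ^ N) = (\<Sum>j<n. cis (2 * pi * real j / real n) ^ N)"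
    by (rule sum.reindex_bij_betw[OF Complex.bij_betw_roots_unity[OF assms], symmetric])
  also have "\<dots> = (\<Sum>j<n. \<omega> ^ j)"
    by (intro sum.cong refl) (simp add: \<omega>_def Complex.DeMoivre mult_ac)
  also have "\<dots> = (\<omega> ^ n - 1) / (\<omega> - 1)"
    using \<open>\<omega> \<noteq> 1\<close> by (subst geometric_sum) auto
  also have "\<omega> ^ n = cis (2 * pi * real N)" using assms by (simp add: \<omega>_def Complex.DeMoivre)
  also have "\<dots> = 1" by (simp add: complex_eq_iff)
  finally show ?thesis using False by simp
qed

lemma pow_Gcd_eq_1:
  fixes z :: "'a::comm_ring_1"
  assumes "finite A" "\<And>a. a \<in> A \<Longrightarrow> z ^ a = 1"
  shows "z ^ Gcd A = 1"
  using assms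
proof (induction A rule: finite_induct)
  case (insert a A)
  then have "z ^ a = 1" "z ^ Gcd A = 1" by auto
  then show ?case
  proof (cases "a = 0")
    case False
    then obtain x y where xy: "a * x = Gcd A * y + gcd a (Gcd A)"
      using bezout_nat by blast
    have "1 = (z ^ a) ^ x" using \<open>z ^ a = 1\<close> by simp
    also have "\<dots> = (z ^ Gcd A) ^ y * z ^ gcd a (Gcd A)"
      by (simp add: power_mult[symmetric] xy power_add)
    finally show ?thesis using \<open>z ^ Gcd A = 1\<close> by simp
  qed simp
qed simp

lemma norm_sum_eq_sum_norm_aligned:
  fixes w :: "'a \<Rightarrow> complex"
  assumes "finite A" "norm (sum w A) = (\<Sum>i\<in>A. norm (w i))" "j \<in> A"
  shows "w j * cnj (sum w A) = of_real (norm (w j) * norm (sum w A))"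
proof -
  define S where "S = sum w A"
  define u where "u i = w i * cnj S" for i
  have Re_le: "Re (u i) \<le> norm (w i) * norm S" for i
    using complex_Re_le_cmod[of "u i"] by (simp add: u_def norm_mult)
  have "(\<Sum>i\<in>A. Re (u i)) = Re (S * cnj S)"
    by (simp add: u_def S_def Re_sum sum_distrib_right)
  also have "\<dots> = norm S * norm S"
    by (metis Re_complex_of_real complex_norm_square power2_eq_square)
  also have "\<dots> = (\<Sum>i\<in>A. norm (w i) * norm S)"
    using assms(2) by (simp add: S_def sum_distrib_right)
  finally have "(\<Sum>i\<in>A. norm (w i) * norm S - Re (u i)) = 0"
    by (simp add: sum_subtractf)
  then have "Re (u j) = norm (u j)"
    using assms(1,3) Re_le by (subst (asm) sum_nonneg_eq_0_iff) (auto simp: u_def norm_mult)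
  then have "u j = of_real (norm (u j))"
    by (metis complex_nonneg_Reals_iff complex_eq_iff norm_eq_Re_iff Im_complex_of_real
        Re_complex_of_real)
  then show ?thesis by (simp only: u_def S_def norm_mult complex_mod_cnj)
qed

lemma pderiv_prod_linear_repeated_root:
  fixes \<eta> :: "nat \<Rightarrow> 'a::idom"
  assumes "a < k" "b < k" "a \<noteq> b" "\<eta> a = \<eta> b"
  shows "poly (pderiv (\<Prod>i<k. [:- \<eta> i, 1:])) (\<eta> a) = 0"
proof -
  define q where "q = [:- \<eta> a, 1:]"
  define R where "R = (\<Prod>i\<in>{..<k}-{a}-{b}. [:- \<eta> i, 1:])"
  have "(\<Prod>i<k. [:- \<eta> i, 1:]) = q * (\<Prod>i\<in>{..<k}-{a}. [:- \<eta> i, 1:])"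
    using assms by (simp add: prod.remove q_def)
  also have "(\<Prod>i\<in>{..<k}-{a}. [:- \<eta> i, 1:]) = q * R"
    unfolding R_def q_def using assms by (subst prod.remove[of _ b]) auto
  finally have "pderiv (\<Prod>i<k. [:- \<eta> i, 1:]) = q * (q * pderiv R + R * pderiv q) + q * R * pderiv q"
    by (simp add: pderiv_mult)
  then show ?thesis by (simp add: q_def)
qed

lemma norm_sum_power_le:
  fixes z :: "'a \<Rightarrow> 'b::real_normed_div_algebra"
  assumes "\<And>i. i \<in> A \<Longrightarrow> norm (z i) \<le> r"
  shows "norm (\<Sum>i\<in>A. z i ^ N) \<le> real (card A) * r ^ N"
proof -
  have "(\<Sum>i\<in>A. norm (z i) ^ N) \<le> real (card A) * r ^ N"
    using assms by (intro sum_bounded_above power_mono) auto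
  then show ?thesis
    by (intro order_trans[OF norm_sum]) (simp add: norm_power)
qed

lemma weighted_power_sum_less:
  fixes a :: "nat \<Rightarrow> real"
  assumes "k \<ge> 1" "\<And>i. a i \<ge> 0" "a 0 > 0" "\<phi> > 0" "\<phi> ^ k = (\<Sum>i<k. a i * \<phi> ^ i)" "r > \<phi>"
  shows "(\<Sum>i<k. a i * r ^ i) < r ^ k"
proof -
  have "(\<Sum>i<k. a i * r ^ i * \<phi> ^ k) < (\<Sum>i<k. a i * \<phi> ^ i * r ^ k)"
  proof (rule sum_strict_mono_ex1)
    show "\<forall>i\<in>{..<k}. a i * r ^ i * \<phi> ^ k \<le> a i * \<phi> ^ i * r ^ k"
    proof
      fix i assume "i \<in> {..<k}"
      then have split: "\<phi> ^ k = \<phi> ^ i * \<phi> ^ (k - i)" "r ^ k = r ^ i * r ^ (k - i)"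
        by (simp_all add: power_add[symmetric])
      have "a i * (r ^ i * \<phi> ^ i) * \<phi> ^ (k - i) \<le> a i * (r ^ i * \<phi> ^ i) * r ^ (k - i)"
        using assms by (intro mult_left_mono power_mono) auto
      then show "a i * r ^ i * \<phi> ^ k \<le> a i * \<phi> ^ i * r ^ k"
        unfolding split by (simp add: mult_ac)
    qed
    have "\<phi> ^ k < r ^ k" using assms by (intro power_strict_mono) auto
    then show "\<exists>i\<in>{..<k}. a i * r ^ i * \<phi> ^ k < a i * \<phi> ^ i * r ^ k"
      using assms by (intro bexI[of _ 0]) auto
  qed simp
  also have "\<dots> = \<phi> ^ k * r ^ k" by (simp add: assms(5) sum_distrib_right)
  finally have "\<phi> ^ k * (\<Sum>i<k. a i * r ^ i) < \<phi> ^ k * r ^ k"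
    by (simp add: sum_distrib_left mult_ac)
  then show ?thesis using assms(4) by simp
qed

lemma poly_char_poly: "poly (char_poly k c) z = z ^ k - (\<Sum>i<k. of_nat (c i) * z ^ i)"
  by (simp add: char_poly_def poly_monom poly_sum)

lemma poly_pderiv_char_poly:
  "z * poly (pderiv (char_poly k c)) z = of_nat k * z ^ k - (\<Sum>i<k. of_nat (i * c i) * z ^ i)"
proof -
  have shift: "z * (of_nat (n * b) * z ^ (n - 1)) = of_nat (n * b) * z ^ n" for n b :: nat
    by (cases n) auto
  have "pderiv (sum f A) = (\<Sum>x\<in>A. pderiv (f x))" for f :: "nat \<Rightarrow> complex poly" and A
    using higher_pderiv_sum[of 1 f A] by simp
  then have "pderiv (char_poly k c) =
      monom (of_nat (k * 1)) (k - 1) - (\<Sum>i<k. monom (of_nat (i * c i)) (i - 1))"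
    by (simp add: char_poly_def pderiv_diff pderiv_monom)
  then show ?thesis
    by (simp only: poly_diff poly_sum poly_monom right_diff_distrib sum_distrib_left shift) simp
qed

lemma char_gcd_dvd:
  shows char_gcd_dvd_degree: "char_gcd k c dvd k"
    and char_gcd_dvd_support: "i < k \<Longrightarrow> c i \<noteq> 0 \<Longrightarrow> char_gcd k c dvd i"
  unfolding char_gcd_def by (rule Gcd_dvd; simp)+

lemma char_poly_mult_root_unity:
  assumes "\<zeta> ^ char_gcd k c = 1"
  shows "poly (char_poly k c) (\<zeta> * z) = poly (char_poly k c) z"
    and "(\<zeta> * z) * poly (pderiv (char_poly k c)) (\<zeta> * z) = z * poly (pderiv (char_poly k c)) z"
proof -
  have pow: "\<zeta> ^ i = 1" if "char_gcd k c dvd i" for i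
    using that assms by (auto simp: power_mult)
  have "(\<zeta> * z) ^ k = z ^ k" using pow[OF char_gcd_dvd_degree] by (simp add: power_mult_distrib)
  moreover have "of_nat (d * c i) * (\<zeta> * z) ^ i = of_nat (d * c i) * z ^ i" if "i < k" for i d
    using that pow[OF char_gcd_dvd_support] by (cases "c i = 0") (auto simp: power_mult_distrib)
  ultimately show "poly (char_poly k c) (\<zeta> * z) = poly (char_poly k c) z"
    and "(\<zeta> * z) * poly (pderiv (char_poly k c)) (\<zeta> * z) = z * poly (pderiv (char_poly k c)) z"
    using sum.cong[OF refl, of "{..<k}"] unfolding poly_char_poly poly_pderiv_char_poly
    by (metis (no_types, lifting) lessThan_iff mult_1 of_nat_mult)+
qed

locale char_poly_perron_root =
  fixes k :: nat and c :: "nat \<Rightarrow> nat" and \<phi> :: real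
  assumes degree_pos: "k \<ge> 1" and const_pos: "c 0 \<ge> 1"
    and perron_pos: "\<phi> > 0" and perron_root: "poly (char_poly k c) (of_real \<phi>) = 0"
begin

lemma perron_eq: "\<phi> ^ k = (\<Sum>i<k. real (c i) * \<phi> ^ i)"
proof -
  have "complex_of_real (\<phi> ^ k) = complex_of_real (\<Sum>i<k. real (c i) * \<phi> ^ i)"
    using perron_root by (simp add: poly_char_poly)
  then show ?thesis by (simp only: of_real_eq_iff)
qed

lemma root_norm_le:
  assumes "poly (char_poly k c) z = 0"
  shows "norm z \<le> \<phi>"
proof (rule ccontr)
  assume "\<not> norm z \<le> \<phi>"
  have "z ^ k = (\<Sum>i<k. of_nat (c i) * z ^ i)"
    using assms by (simp add: poly_char_poly)
  then have "norm z ^ k = norm (\<Sum>i<k. of_nat (c i) * z ^ i)"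
    by (metis norm_power)
  also have "\<dots> \<le> (\<Sum>i<k. real (c i) * norm z ^ i)"
    by (rule order_trans[OF norm_sum]) (simp add: norm_mult norm_power)
  also have "\<dots> < norm z ^ k"
    using \<open>\<not> norm z \<le> \<phi>\<close> degree_pos const_pos perron_pos perron_eq
    by (intro weighted_power_sum_less) auto
  finally show False by simp
qed

lemma root_norm_eq_pow_eq:
  assumes "poly (char_poly k c) z = 0" "norm z = \<phi>" "i < k" "c i \<noteq> 0"
  shows "(z / of_real \<phi>) ^ i = (z / of_real \<phi>) ^ k"
proof -
  define w where "w j = of_nat (c j) * z ^ j" for j
  have sum_w: "sum w {..<k} = z ^ k" using assms(1) by (simp add: w_def poly_char_poly)
  have "norm (sum w {..<k}) = (\<Sum>j<k. norm (w j))"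
    unfolding sum_w by (simp add: sum_w w_def norm_power norm_mult assms(2) perron_eq)
  then have "w i * cnj (z ^ k) = of_real (norm (w i) * \<phi> ^ k)"
    using norm_sum_eq_sum_norm_aligned[of "{..<k}" w i] assms(2,3)
    by (simp add: sum_w norm_power)
  then have "z ^ i * (z ^ k * cnj (z ^ k)) = z ^ k * of_real (\<phi> ^ i * \<phi> ^ k)"
    using assms(2,4) by (simp add: w_def norm_mult norm_power mult_ac)
  also have "z ^ k * cnj (z ^ k) = of_real (norm (z ^ k) ^ 2)"
    by (rule complex_norm_square[symmetric])
  finally show ?thesis
    using perron_pos assms(2) by (simp add: norm_power power_divide divide_simps mult_ac power2_eq_square)
qed

lemma root_norm_eq_pow_char_gcd:
  assumes "poly (char_poly k c) z = 0" "norm z = \<phi>"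
  shows "(z / of_real \<phi>) ^ char_gcd k c = 1"
proof -
  have k: "(z / of_real \<phi>) ^ k = 1"
    using root_norm_eq_pow_eq[OF assms, of 0] degree_pos const_pos by simp
  show ?thesis
    unfolding char_gcd_def
    by (rule pow_Gcd_eq_1) (use k root_norm_eq_pow_eq[OF assms] in auto)
qed

lemma pderiv_perron_nonzero: "poly (pderiv (char_poly k c)) (of_real \<phi>) \<noteq> 0"
proof
  assume "poly (pderiv (char_poly k c)) (of_real \<phi>) = 0"
  then have "complex_of_real (\<Sum>i<k. real (i * c i) * \<phi> ^ i) = complex_of_real (real k * \<phi> ^ k)"
    using poly_pderiv_char_poly[of "of_real \<phi>" k c] by simp
  then have "(\<Sum>i<k. real (i * c i) * \<phi> ^ i) = real k * \<phi> ^ k"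
    by (simp only: of_real_eq_iff)
  also have "\<dots> = (\<Sum>i<k. real k * (real (c i) * \<phi> ^ i))"
    by (subst perron_eq) (simp add: sum_distrib_left)
  finally have "(\<Sum>i<k. real (i * c i) * \<phi> ^ i) = (\<Sum>i<k. real k * (real (c i) * \<phi> ^ i))" .
  moreover have "(\<Sum>i<k. real (i * c i) * \<phi> ^ i) < (\<Sum>i<k. real k * (real (c i) * \<phi> ^ i))"
    using perron_pos degree_pos const_pos
    by (intro sum_strict_mono_ex1) (auto intro!: mult_right_mono bexI[of _ 0] simp: mult.assoc[symmetric])
  ultimately show False by simp
qed

text \<open>Injectivity holds because every \<open>\<phi>\<zeta>\<close> with \<open>\<zeta>\<^sup>g = 1\<close> is a simple root.\<close>
lemma bij_betw_dominant_roots: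
  assumes roots: "char_poly k c = (\<Prod>i<k. [:- \<eta> i, 1:])"
  shows "bij_betw (\<lambda>i. \<eta> i / of_real \<phi>) {i. i < k \<and> norm (\<eta> i) = \<phi>}
           {\<zeta>. \<zeta> ^ char_gcd k c = 1}"
proof -
  have root_iff: "poly (char_poly k c) z = 0 \<longleftrightarrow> (\<exists>i<k. \<eta> i = z)" for z
    by (auto simp: roots poly_prod)
  have scaled: "\<eta> i = of_real \<phi> * (\<eta> i / of_real \<phi>)" for i
    using perron_pos by simp
  have simple: "poly (pderiv (char_poly k c)) (of_real \<phi> * \<zeta>) \<noteq> 0"
    if "\<zeta> ^ char_gcd k c = 1" for \<zeta>
    using char_poly_mult_root_unity(2)[OF that, of "of_real \<phi>"] pderiv_perron_nonzero perron_pos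
    by (auto simp: mult.commute)
  have g_pos: "char_gcd k c > 0"
    using char_gcd_dvd_degree[of k c] degree_pos by (auto intro: Nat.gr0I)
  show ?thesis
    unfolding bij_betw_def
  proof (intro conjI inj_onI equalityI subsetI)
    fix a b assume ab: "a \<in> {i. i < k \<and> norm (\<eta> i) = \<phi>}" "b \<in> {i. i < k \<and> norm (\<eta> i) = \<phi>}"
      and eq: "\<eta> a / of_real \<phi> = \<eta> b / of_real \<phi>"
    show "a = b"
    proof (rule ccontr)
      assume "a \<noteq> b"
      then have "poly (pderiv (char_poly k c)) (\<eta> a) = 0"
        using ab eq perron_pos unfolding roots by (intro pderiv_prod_linear_repeated_root) auto
      with simple[of "\<eta> a / of_real \<phi>"] scaled ab root_iff show False
        by (metis (mono_tags, lifting) mem_Collect_eq root_norm_eq_pow_char_gcd)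
    qed
  next
    fix \<zeta> assume "\<zeta> \<in> (\<lambda>i. \<eta> i / of_real \<phi>) ` {i. i < k \<and> norm (\<eta> i) = \<phi>}"
    then show "\<zeta> \<in> {\<zeta>. \<zeta> ^ char_gcd k c = 1}"
      using root_iff root_norm_eq_pow_char_gcd by auto
  next
    fix \<zeta> :: complex assume "\<zeta> \<in> {\<zeta>. \<zeta> ^ char_gcd k c = 1}"
    then have \<zeta>: "\<zeta> ^ char_gcd k c = 1" by simp
    then have "poly (char_poly k c) (\<zeta> * of_real \<phi>) = 0"
      by (simp add: char_poly_mult_root_unity(1) perron_root)
    then obtain i where i: "i < k" "\<eta> i = of_real \<phi> * \<zeta>"
      using root_iff by (metis mult.commute)
    have "norm \<zeta> = 1" using power_eq_1_iff[OF \<zeta>] g_pos by simp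
    then show "\<zeta> \<in> (\<lambda>i. \<eta> i / of_real \<phi>) ` {i. i < k \<and> norm (\<eta> i) = \<phi>}"
      using i perron_pos by (intro image_eqI[of _ _ i]) (auto simp: norm_mult)
  qed
qed

lemma dominant_roots_card_and_power_sum:
  assumes "char_poly k c = (\<Prod>i<k. [:- \<eta> i, 1:])"
  shows "card {i. i < k \<and> norm (\<eta> i) = \<phi>} = char_gcd k c"
    and "(\<Sum>i | i < k \<and> norm (\<eta> i) = \<phi>. \<eta> i ^ N) =
           (if char_gcd k c dvd N then of_nat (char_gcd k c) * of_real (\<phi> ^ N) else 0)"
proof -
  note bij = bij_betw_dominant_roots[OF assms]
  have g_pos: "char_gcd k c > 0"
    using char_gcd_dvd_degree[of k c] degree_pos by (auto intro: Nat.gr0I)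
  show "card {i. i < k \<and> norm (\<eta> i) = \<phi>} = char_gcd k c"
    using bij_betw_same_card[OF bij] card_roots_unity_eq[OF g_pos] by simp
  have "(\<Sum>i | i < k \<and> norm (\<eta> i) = \<phi>. \<eta> i ^ N) =
          of_real (\<phi> ^ N) * (\<Sum>i | i < k \<and> norm (\<eta> i) = \<phi>. (\<eta> i / of_real \<phi>) ^ N)"
    using perron_pos by (simp add: power_divide sum_distrib_left)
  also have "\<dots> = of_real (\<phi> ^ N) * (\<Sum>\<zeta> | \<zeta> ^ char_gcd k c = 1. \<zeta> ^ N)"
    by (simp only: sum.reindex_bij_betw[OF bij, of "\<lambda>\<zeta>. \<zeta> ^ N"])
  finally show "(\<Sum>i | i < k \<and> norm (\<eta> i) = \<phi>. \<eta> i ^ N) =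
           (if char_gcd k c dvd N then of_nat (char_gcd k c) * of_real (\<phi> ^ N) else 0)"
    by (simp add: sum_power_roots_unity[OF g_pos])
qed

end

theorem mainTheorem12:
  fixes k N :: nat and c :: "nat \<Rightarrow> nat" and \<eta> :: "nat \<Rightarrow> complex"
    and \<phi> :: real and \<psi> :: complex
  assumes "k \<ge> 1" and "c 0 \<ge> 1"
    and roots: "char_poly k c = (\<Prod>i<k. [:- \<eta> i, 1:])"
    and phi_pos: "\<phi> > 0" and phi_root: "poly (char_poly k c) (complex_of_real \<phi>) = 0"
    and psi: "k > char_gcd k c \<Longrightarrow>
        (\<exists>i<k. \<psi> = \<eta> i) \<and> norm \<psi> < \<phi> \<and>
        (\<forall>i<k. norm (\<eta> i) < \<phi> \<longrightarrow> norm (\<eta> i) \<le> norm \<psi>)"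
    and "N > 0"
  shows "(\<not> char_gcd k c dvd N \<longrightarrow>
            norm (\<Sum>i<k. \<eta> i ^ N) \<le> real (k - char_gcd k c) * norm \<psi> ^ N) \<and>
         (char_gcd k c dvd N \<longrightarrow>
            norm (of_nat (char_gcd k c) * complex_of_real (\<phi> ^ N) - (\<Sum>i<k. \<eta> i ^ N))
              \<le> real (k - char_gcd k c) * norm \<psi> ^ N)"
proof -
  interpret char_poly_perron_root k c \<phi>
    using assms by unfold_locales
  have root: "poly (char_poly k c) (\<eta> i) = 0" if "i < k" for i
    using that by (auto simp: roots poly_prod)
  define D where "D = {i. i < k \<and> norm (\<eta> i) = \<phi>}"
  define R where "R = {..<k} - D"
  have "D \<subseteq> {..<k}" by (auto simp: D_def)
  then have card_R: "card R = k - char_gcd k c"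
    and split: "(\<Sum>i<k. \<eta> i ^ N) = (\<Sum>i\<in>R. \<eta> i ^ N) + (\<Sum>i\<in>D. \<eta> i ^ N)"
    using dominant_roots_card_and_power_sum(1)[OF roots]
    by (auto simp: R_def D_def card_Diff_subset finite_subset sum.subset_diff)
  have "norm (\<eta> i) \<le> norm \<psi>" if "i \<in> R" for i
  proof -
    have "card R > 0" using that by (auto simp: R_def card_gt_0_iff)
    then have "k > char_gcd k c" using card_R by simp
    moreover have "i < k" "norm (\<eta> i) < \<phi>"
      using that root_norm_le[OF root, of i] by (auto simp: R_def D_def)
    ultimately show ?thesis using psi by blast
  qed
  then have "norm (\<Sum>i\<in>R. \<eta> i ^ N) \<le> real (k - char_gcd k c) * norm \<psi> ^ N"
    using norm_sum_power_le card_R by metis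
  then show ?thesis
    using split dominant_roots_card_and_power_sum(2)[OF roots, of N] by (simp add: D_def)
qed

end
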